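(* Every full triangle functor $F:\mathcal A\to\mathcal B$ between triangulated categories is objective.
   Context: $F$ is objective if every morphism $f$ in $\mathcal A$ with $F(f)=0$ factors through an object $K$ of $\mathcal A$ with $F(K)=0$. A triangle functor is a pair $(F,\xi)$ with $F$ additive and $\xi:F[1]\to[1]F$ a natural isomorphism such that $F$ sends distinguished triangles $(X,Y,Z,u,v,w)$ to distinguished triangles $(F(X),F(Y),F(Z),F(u),F(v),\xi_XF(w))$. *)

theory Defs
  imports Main
begin

text \<open>A category with additive structure, a shift (suspension) and a class of
distinguished triangles.  Composition convention: cmp C g f is g after f.\<close>

record ('o,'m) tricat =
  obj   :: "'o set"
  arr   :: "'m set"
  src   :: "'m \<Rightarrow> 'o"
  tgt   :: "'m \<Rightarrow> 'o"
  cmp   :: "'m \<Rightarrow> 'm \<Rightarrow> 'm"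
  idn   :: "'o \<Rightarrow> 'm"
  adr   :: "'m \<Rightarrow> 'm \<Rightarrow> 'm"
  ngt   :: "'m \<Rightarrow> 'm"
  zro   :: "'o \<Rightarrow> 'o \<Rightarrow> 'm"
  sh_o  :: "'o \<Rightarrow> 'o"
  sh_a  :: "'m \<Rightarrow> 'm"
  dtri  :: "('o \<times> 'o \<times> 'o \<times> 'm \<times> 'm \<times> 'm) set"

definition hom :: "('o,'m) tricat \<Rightarrow> 'o \<Rightarrow> 'o \<Rightarrow> 'm set" where
  "hom C X Y = {f \<in> arr C. src C f = X \<and> tgt C f = Y}"

definition is_category :: "('o,'m) tricat \<Rightarrow> bool" where
  "is_category C \<longleftrightarrow>
     (\<forall>f\<in>arr C. src C f \<in> obj C \<and> tgt C f \<in> obj C) \<and>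
     (\<forall>X\<in>obj C. idn C X \<in> hom C X X) \<and>
     (\<forall>X Y Z f g. f \<in> hom C X Y \<longrightarrow> g \<in> hom C Y Z \<longrightarrow> cmp C g f \<in> hom C X Z) \<and>
     (\<forall>X Y f. f \<in> hom C X Y \<longrightarrow> cmp C (idn C Y) f = f \<and> cmp C f (idn C X) = f) \<and>
     (\<forall>W X Y Z f g h. f \<in> hom C W X \<longrightarrow> g \<in> hom C X Y \<longrightarrow> h \<in> hom C Y Z \<longrightarrow>
        cmp C h (cmp C g f) = cmp C (cmp C h g) f)"

definition is_preadditive :: "('o,'m) tricat \<Rightarrow> bool" where
  "is_preadditive C \<longleftrightarrow> is_category C \<and>
     (\<forall>X\<in>obj C. \<forall>Y\<in>obj C.
        zro C X Y \<in> hom C X Y \<and>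
        (\<forall>f\<in>hom C X Y. \<forall>g\<in>hom C X Y. adr C f g \<in> hom C X Y \<and> adr C f g = adr C g f) \<and>
        (\<forall>f\<in>hom C X Y. \<forall>g\<in>hom C X Y. \<forall>h\<in>hom C X Y.
            adr C (adr C f g) h = adr C f (adr C g h)) \<and>
        (\<forall>f\<in>hom C X Y. adr C (zro C X Y) f = f) \<and>
        (\<forall>f\<in>hom C X Y. ngt C f \<in> hom C X Y \<and> adr C f (ngt C f) = zro C X Y)) \<and>
     (\<forall>X Y Z f g g'. f \<in> hom C X Y \<longrightarrow> g \<in> hom C Y Z \<longrightarrow> g' \<in> hom C Y Z \<longrightarrow>
        cmp C (adr C g g') f = adr C (cmp C g f) (cmp C g' f)) \<and>
     (\<forall>X Y Z f f' g. f \<in> hom C X Y \<longrightarrow> f' \<in> hom C X Y \<longrightarrow> g \<in> hom C Y Z \<longrightarrow>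
        cmp C g (adr C f f') = adr C (cmp C g f) (cmp C g f'))"

definition zero_obj :: "('o,'m) tricat \<Rightarrow> 'o \<Rightarrow> bool" where
  "zero_obj C Z \<longleftrightarrow> Z \<in> obj C \<and>
     (\<forall>X\<in>obj C. (\<exists>!f. f \<in> hom C X Z) \<and> (\<exists>!f. f \<in> hom C Z X))"

definition is_additive :: "('o,'m) tricat \<Rightarrow> bool" where
  "is_additive C \<longleftrightarrow> is_preadditive C \<and> (\<exists>Z. zero_obj C Z) \<and>
     (\<forall>X\<in>obj C. \<forall>Y\<in>obj C. \<exists>P i1 i2 p1 p2.
        i1 \<in> hom C X P \<and> i2 \<in> hom C Y P \<and> p1 \<in> hom C P X \<and> p2 \<in> hom C P Y \<and>
        cmp C p1 i1 = idn C X \<and> cmp C p2 i2 = idn C Y \<and>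
        cmp C p2 i1 = zro C X Y \<and> cmp C p1 i2 = zro C Y X \<and>
        adr C (cmp C i1 p1) (cmp C i2 p2) = idn C P)"

definition is_iso :: "('o,'m) tricat \<Rightarrow> 'o \<Rightarrow> 'o \<Rightarrow> 'm \<Rightarrow> bool" where
  "is_iso C X Y f \<longleftrightarrow> f \<in> hom C X Y \<and>
     (\<exists>g\<in>hom C Y X. cmp C g f = idn C X \<and> cmp C f g = idn C Y)"

definition shift_ok :: "('o,'m) tricat \<Rightarrow> bool" where
  "shift_ok C \<longleftrightarrow>
     bij_betw (sh_o C) (obj C) (obj C) \<and>
     (\<forall>X\<in>obj C. \<forall>Y\<in>obj C. bij_betw (sh_a C) (hom C X Y) (hom C (sh_o C X) (sh_o C Y))) \<and>
     (\<forall>X\<in>obj C. sh_a C (idn C X) = idn C (sh_o C X)) \<and>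
     (\<forall>X Y Z f g. f \<in> hom C X Y \<longrightarrow> g \<in> hom C Y Z \<longrightarrow>
        sh_a C (cmp C g f) = cmp C (sh_a C g) (sh_a C f)) \<and>
     (\<forall>X Y f g. f \<in> hom C X Y \<longrightarrow> g \<in> hom C X Y \<longrightarrow>
        sh_a C (adr C f g) = adr C (sh_a C f) (sh_a C g))"

definition is_tri :: "('o,'m) tricat \<Rightarrow> 'o \<Rightarrow> 'o \<Rightarrow> 'o \<Rightarrow> 'm \<Rightarrow> 'm \<Rightarrow> 'm \<Rightarrow> bool" where
  "is_tri C X Y Z u v w \<longleftrightarrow> X \<in> obj C \<and> Y \<in> obj C \<and> Z \<in> obj C \<and>
     u \<in> hom C X Y \<and> v \<in> hom C Y Z \<and> w \<in> hom C Z (sh_o C X)"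

definition tri_morph :: "('o,'m) tricat \<Rightarrow> 'o \<Rightarrow> 'o \<Rightarrow> 'o \<Rightarrow> 'm \<Rightarrow> 'm \<Rightarrow> 'm
    \<Rightarrow> 'o \<Rightarrow> 'o \<Rightarrow> 'o \<Rightarrow> 'm \<Rightarrow> 'm \<Rightarrow> 'm \<Rightarrow> 'm \<Rightarrow> 'm \<Rightarrow> 'm \<Rightarrow> bool" where
  "tri_morph C X Y Z u v w X' Y' Z' u' v' w' a b c \<longleftrightarrow>
     a \<in> hom C X X' \<and> b \<in> hom C Y Y' \<and> c \<in> hom C Z Z' \<and>
     cmp C u' a = cmp C b u \<and> cmp C v' b = cmp C c v \<and>
     cmp C w' c = cmp C (sh_a C a) w"

definition is_triangulated :: "('o,'m) tricat \<Rightarrow> bool" where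
  "is_triangulated C \<longleftrightarrow> is_additive C \<and> shift_ok C \<and>
     \<comment> \<open>distinguished triangles are triangles\<close>
     (\<forall>X Y Z u v w. (X,Y,Z,u,v,w) \<in> dtri C \<longrightarrow> is_tri C X Y Z u v w) \<and>
     \<comment> \<open>TR1\<close>
     (\<forall>X Y Z u v w X' Y' Z' u' v' w' a b c.
        (X,Y,Z,u,v,w) \<in> dtri C \<longrightarrow> is_tri C X' Y' Z' u' v' w' \<longrightarrow>
        tri_morph C X Y Z u v w X' Y' Z' u' v' w' a b c \<longrightarrow>
        is_iso C X X' a \<longrightarrow> is_iso C Y Y' b \<longrightarrow> is_iso C Z Z' c \<longrightarrow>
        (X',Y',Z',u',v',w') \<in> dtri C) \<and>
     (\<forall>X\<in>obj C. \<forall>Z. zero_obj C Z \<longrightarrow>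
        (X, X, Z, idn C X, zro C X Z, zro C Z (sh_o C X)) \<in> dtri C) \<and>
     (\<forall>X Y u. X \<in> obj C \<longrightarrow> Y \<in> obj C \<longrightarrow> u \<in> hom C X Y \<longrightarrow>
        (\<exists>Z v w. (X,Y,Z,u,v,w) \<in> dtri C)) \<and>
     \<comment> \<open>TR2 (rotation)\<close>
     (\<forall>X Y Z u v w. is_tri C X Y Z u v w \<longrightarrow>
        ((X,Y,Z,u,v,w) \<in> dtri C \<longleftrightarrow> (Y, Z, sh_o C X, v, w, ngt C (sh_a C u)) \<in> dtri C)) \<and>
     \<comment> \<open>TR3\<close>
     (\<forall>X Y Z u v w X' Y' Z' u' v' w' a b.
        (X,Y,Z,u,v,w) \<in> dtri C \<longrightarrow> (X',Y',Z',u',v',w') \<in> dtri C \<longrightarrow>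
        a \<in> hom C X X' \<longrightarrow> b \<in> hom C Y Y' \<longrightarrow> cmp C u' a = cmp C b u \<longrightarrow>
        (\<exists>c. tri_morph C X Y Z u v w X' Y' Z' u' v' w' a b c)) \<and>
     \<comment> \<open>TR4 (octahedral axiom)\<close>
     (\<forall>X Y Z u v Z' j k X' l i Y' m n.
        u \<in> hom C X Y \<longrightarrow> v \<in> hom C Y Z \<longrightarrow>
        (X, Y, Z', u, j, k) \<in> dtri C \<longrightarrow>
        (Y, Z, X', v, l, i) \<in> dtri C \<longrightarrow>
        (X, Z, Y', cmp C v u, m, n) \<in> dtri C \<longrightarrow>
        (\<exists>f g. f \<in> hom C Z' Y' \<and> g \<in> hom C Y' X' \<and>
           (Z', Y', X', f, g, cmp C (sh_a C j) i) \<in> dtri C \<and>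
           cmp C f j = cmp C m v \<and> cmp C n f = k \<and>
           cmp C g m = l \<and> cmp C i g = cmp C (sh_a C u) n))"

definition is_triangle_functor ::
  "('o1,'m1) tricat \<Rightarrow> ('o2,'m2) tricat \<Rightarrow> ('o1 \<Rightarrow> 'o2) \<Rightarrow> ('m1 \<Rightarrow> 'm2) \<Rightarrow> ('o1 \<Rightarrow> 'm2) \<Rightarrow> bool"
where
  "is_triangle_functor A B Fo Fm xi \<longleftrightarrow>
     \<comment> \<open>functor\<close>
     (\<forall>X\<in>obj A. Fo X \<in> obj B) \<and>
     (\<forall>X Y f. f \<in> hom A X Y \<longrightarrow> Fm f \<in> hom B (Fo X) (Fo Y)) \<and>
     (\<forall>X\<in>obj A. Fm (idn A X) = idn B (Fo X)) \<and>
     (\<forall>X Y Z f g. f \<in> hom A X Y \<longrightarrow> g \<in> hom A Y Z \<longrightarrow>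
        Fm (cmp A g f) = cmp B (Fm g) (Fm f)) \<and>
     \<comment> \<open>additive\<close>
     (\<forall>X Y f g. f \<in> hom A X Y \<longrightarrow> g \<in> hom A X Y \<longrightarrow>
        Fm (adr A f g) = adr B (Fm f) (Fm g)) \<and>
     \<comment> \<open>xi : F[1] -> [1]F natural isomorphism\<close>
     (\<forall>X\<in>obj A. is_iso B (Fo (sh_o A X)) (sh_o B (Fo X)) (xi X)) \<and>
     (\<forall>X Y f. f \<in> hom A X Y \<longrightarrow>
        cmp B (xi Y) (Fm (sh_a A f)) = cmp B (sh_a B (Fm f)) (xi X)) \<and>
     \<comment> \<open>preservation of distinguished triangles\<close>
     (\<forall>X Y Z u v w. (X,Y,Z,u,v,w) \<in> dtri A \<longrightarrow>
        (Fo X, Fo Y, Fo Z, Fm u, Fm v, cmp B (xi X) (Fm w)) \<in> dtri B)"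

definition is_full ::
  "('o1,'m1) tricat \<Rightarrow> ('o2,'m2) tricat \<Rightarrow> ('o1 \<Rightarrow> 'o2) \<Rightarrow> ('m1 \<Rightarrow> 'm2) \<Rightarrow> bool" where
  "is_full A B Fo Fm \<longleftrightarrow>
     (\<forall>X\<in>obj A. \<forall>Y\<in>obj A. \<forall>g\<in>hom B (Fo X) (Fo Y). \<exists>f\<in>hom A X Y. Fm f = g)"

definition is_objective ::
  "('o1,'m1) tricat \<Rightarrow> ('o2,'m2) tricat \<Rightarrow> ('o1 \<Rightarrow> 'o2) \<Rightarrow> ('m1 \<Rightarrow> 'm2) \<Rightarrow> bool" where
  "is_objective A B Fo Fm \<longleftrightarrow>
     (\<forall>X Y f. f \<in> hom A X Y \<longrightarrow> Fm f = zro B (Fo X) (Fo Y) \<longrightarrow>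
        (\<exists>K a b. K \<in> obj A \<and> zero_obj B (Fo K) \<and> a \<in> hom A X K \<and> b \<in> hom A K Y \<and>
           f = cmp A b a))"

end

theory Submission
  imports Defs
begin

text \<open>Let F f = 0 for f : X \<rightarrow> Y and complete f to a distinguished triangle
W \<rightarrow> X \<rightarrow> Y \<rightarrow> W[1] with first map w.  In the image triangle the identity of F X is
killed by F f, hence factors through F w; fullness lifts the factor to s : X \<rightarrow> W, so
e = w s is an endomorphism of X with F e = 1 and f e = 0.  The cone K of e is sent
to the cone of an identity, hence F K = 0, and f factors through X \<rightarrow> K because
f e = 0.\<close>

locale category =
  fixes C :: "('o,'m) tricat"
  assumes is_category: "is_category C"
begin

lemma hom_objs:
  assumes "f \<in> hom C X Y"
  shows "X \<in> obj C" "Y \<in> obj C"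
  using assms is_category unfolding is_category_def hom_def by auto

lemma comp_in_hom: "f \<in> hom C X Y \<Longrightarrow> g \<in> hom C Y Z \<Longrightarrow> cmp C g f \<in> hom C X Z"
  using is_category unfolding is_category_def by blast

lemma id_in_hom: "X \<in> obj C \<Longrightarrow> idn C X \<in> hom C X X"
  using is_category unfolding is_category_def by blast

lemma comp_id_left: "f \<in> hom C X Y \<Longrightarrow> cmp C (idn C Y) f = f"
  using is_category unfolding is_category_def by blast

lemma comp_id_right: "f \<in> hom C X Y \<Longrightarrow> cmp C f (idn C X) = f"
  using is_category unfolding is_category_def by blast

lemma comp_assoc:
  "f \<in> hom C W X \<Longrightarrow> g \<in> hom C X Y \<Longrightarrow> h \<in> hom C Y Z \<Longrightarrow>
   cmp C h (cmp C g f) = cmp C (cmp C h g) f"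
  using is_category unfolding is_category_def by blast

end

locale preadditive =
  fixes C :: "('o,'m) tricat"
  assumes is_preadditive: "is_preadditive C"

sublocale preadditive \<subseteq> category
  using is_preadditive unfolding is_preadditive_def by unfold_locales (elim conjE)

context preadditive
begin

lemma hom_abelian_group:
  assumes "X \<in> obj C" "Y \<in> obj C"
  shows "zro C X Y \<in> hom C X Y \<and>
    (\<forall>f\<in>hom C X Y. \<forall>g\<in>hom C X Y. adr C f g \<in> hom C X Y \<and> adr C f g = adr C g f) \<and>
    (\<forall>f\<in>hom C X Y. \<forall>g\<in>hom C X Y. \<forall>h\<in>hom C X Y.
        adr C (adr C f g) h = adr C f (adr C g h)) \<and>
    (\<forall>f\<in>hom C X Y. adr C (zro C X Y) f = f) \<and>
    (\<forall>f\<in>hom C X Y. ngt C f \<in> hom C X Y \<and> adr C f (ngt C f) = zro C X Y)"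
proof -
  have "\<forall>X\<in>obj C. \<forall>Y\<in>obj C. zro C X Y \<in> hom C X Y \<and>
    (\<forall>f\<in>hom C X Y. \<forall>g\<in>hom C X Y. adr C f g \<in> hom C X Y \<and> adr C f g = adr C g f) \<and>
    (\<forall>f\<in>hom C X Y. \<forall>g\<in>hom C X Y. \<forall>h\<in>hom C X Y.
        adr C (adr C f g) h = adr C f (adr C g h)) \<and>
    (\<forall>f\<in>hom C X Y. adr C (zro C X Y) f = f) \<and>
    (\<forall>f\<in>hom C X Y. ngt C f \<in> hom C X Y \<and> adr C f (ngt C f) = zro C X Y)"
    using is_preadditive unfolding is_preadditive_def by (elim conjE)
  then show ?thesis
    using assms by blast
qed

lemma zero_in_hom: "X \<in> obj C \<Longrightarrow> Y \<in> obj C \<Longrightarrow> zro C X Y \<in> hom C X Y"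
  using hom_abelian_group by blast

lemma add_commute: "f \<in> hom C X Y \<Longrightarrow> g \<in> hom C X Y \<Longrightarrow> adr C f g = adr C g f"
  using hom_abelian_group hom_objs by blast

lemma add_assoc:
  "f \<in> hom C X Y \<Longrightarrow> g \<in> hom C X Y \<Longrightarrow> h \<in> hom C X Y \<Longrightarrow>
   adr C (adr C f g) h = adr C f (adr C g h)"
  using hom_abelian_group hom_objs by blast

lemma add_zero_left: "f \<in> hom C X Y \<Longrightarrow> adr C (zro C X Y) f = f"
  using hom_abelian_group hom_objs by blast

lemma neg_in_hom: "f \<in> hom C X Y \<Longrightarrow> ngt C f \<in> hom C X Y"
  using hom_abelian_group hom_objs by blast

lemma add_neg: "f \<in> hom C X Y \<Longrightarrow> adr C f (ngt C f) = zro C X Y"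
  using hom_abelian_group hom_objs by blast

lemma comp_add_left:
  "f \<in> hom C X Y \<Longrightarrow> g \<in> hom C Y Z \<Longrightarrow> g' \<in> hom C Y Z \<Longrightarrow>
   cmp C (adr C g g') f = adr C (cmp C g f) (cmp C g' f)"
  using is_preadditive unfolding is_preadditive_def by (elim conjE) simp

lemma comp_add_right:
  "f \<in> hom C X Y \<Longrightarrow> f' \<in> hom C X Y \<Longrightarrow> g \<in> hom C Y Z \<Longrightarrow>
   cmp C g (adr C f f') = adr C (cmp C g f) (cmp C g f')"
  using is_preadditive unfolding is_preadditive_def by (elim conjE) simp

lemma add_zero_right:
  assumes "f \<in> hom C X Y"
  shows "adr C f (zro C X Y) = f"
  using assms add_commute add_zero_left zero_in_hom hom_objs by metis

lemma add_self_eq_zero: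
  assumes f: "f \<in> hom C X Y" and ff: "adr C f f = f"
  shows "f = zro C X Y"
proof -
  have "f = adr C f (adr C f (ngt C f))"
    using f add_neg add_zero_right by simp
  also have "\<dots> = adr C (adr C f f) (ngt C f)"
    using f neg_in_hom add_assoc by simp
  finally show ?thesis
    using ff f add_neg by simp
qed

lemma neg_unique:
  assumes f: "f \<in> hom C X Y" and g: "g \<in> hom C X Y" and fg: "adr C f g = zro C X Y"
  shows "g = ngt C f"
proof -
  have nf: "ngt C f \<in> hom C X Y"
    using f neg_in_hom by blast
  have "g = adr C (adr C (ngt C f) f) g"
    using f g nf add_commute add_neg add_zero_left by simp
  also have "\<dots> = ngt C f"
    using f g nf fg add_assoc add_zero_right by simp
  finally show ?thesis .
qed

lemma neg_neg: "f \<in> hom C X Y \<Longrightarrow> ngt C (ngt C f) = f"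
  using neg_unique neg_in_hom add_commute add_neg by metis

lemma neg_eq_zeroD:
  assumes f: "f \<in> hom C X Y" and "ngt C f = zro C X Y"
  shows "f = zro C X Y"
proof -
  have "zro C X Y = ngt C (zro C X Y)"
    using f hom_objs zero_in_hom add_zero_left neg_unique by metis
  then show ?thesis
    using assms neg_neg by metis
qed

lemma comp_zero_left:
  assumes f: "f \<in> hom C X Y" and Z: "Z \<in> obj C"
  shows "cmp C (zro C Y Z) f = zro C X Z"
proof -
  have z: "zro C Y Z \<in> hom C Y Z"
    using f Z hom_objs zero_in_hom by blast
  have "adr C (cmp C (zro C Y Z) f) (cmp C (zro C Y Z) f) = cmp C (zro C Y Z) f"
    using comp_add_left[OF f z z] add_zero_left[OF z] by simp
  then show ?thesis
    using add_self_eq_zero comp_in_hom[OF f z] by blast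
qed

lemma comp_zero_right:
  assumes g: "g \<in> hom C Y Z" and X: "X \<in> obj C"
  shows "cmp C g (zro C X Y) = zro C X Z"
proof -
  have z: "zro C X Y \<in> hom C X Y"
    using g X hom_objs zero_in_hom by blast
  have "adr C (cmp C g (zro C X Y)) (cmp C g (zro C X Y)) = cmp C g (zro C X Y)"
    using comp_add_right[OF z z g] add_zero_left[OF z] by simp
  then show ?thesis
    using add_self_eq_zero comp_in_hom[OF z g] by blast
qed

lemma comp_neg_left:
  assumes f: "f \<in> hom C X Y" and g: "g \<in> hom C Y Z"
  shows "cmp C (ngt C g) f = ngt C (cmp C g f)"
proof -
  have "adr C (cmp C g f) (cmp C (ngt C g) f) = zro C X Z"
    using comp_add_left[OF f g neg_in_hom[OF g]] add_neg[OF g] comp_zero_left[OF f] hom_objs[OF g]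
    by simp
  then show ?thesis
    using neg_unique comp_in_hom f g neg_in_hom by blast
qed

lemma comp_neg_right:
  assumes f: "f \<in> hom C X Y" and g: "g \<in> hom C Y Z"
  shows "cmp C g (ngt C f) = ngt C (cmp C g f)"
proof -
  have "adr C (cmp C g f) (cmp C g (ngt C f)) = zro C X Z"
    using comp_add_right[OF f neg_in_hom[OF f] g] add_neg[OF f] comp_zero_right[OF g] hom_objs[OF f]
    by simp
  then show ?thesis
    using neg_unique comp_in_hom f g neg_in_hom by blast
qed

lemma zero_objI:
  assumes K: "K \<in> obj C" and id0: "idn C K = zro C K K"
  shows "zero_obj C K"
  unfolding zero_obj_def
proof (intro conjI ballI K)
  fix Y assume Y: "Y \<in> obj C"
  have "f = zro C Y K" if "f \<in> hom C Y K" for f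
    using that comp_id_left id0 comp_zero_left K by metis
  then show "\<exists>!f. f \<in> hom C Y K"
    using zero_in_hom Y K by blast
  have "f = zro C K Y" if "f \<in> hom C K Y" for f
    using that comp_id_right id0 comp_zero_right K by metis
  then show "\<exists>!f. f \<in> hom C K Y"
    using zero_in_hom Y K by blast
qed

end

locale triangulated =
  fixes C :: "('o,'m) tricat"
  assumes is_triangulated: "is_triangulated C"

sublocale triangulated \<subseteq> preadditive
  using is_triangulated unfolding is_triangulated_def is_additive_def
  by unfold_locales (elim conjE)

context triangulated
begin

lemma shift_ok: "shift_ok C"
  using is_triangulated unfolding is_triangulated_def by (elim conjE)

lemma exists_zero_obj: "\<exists>Z. zero_obj C Z"
  using is_triangulated unfolding is_triangulated_def is_additive_def by (elim conjE)

lemma shift_hom_bij: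
  "X \<in> obj C \<Longrightarrow> Y \<in> obj C \<Longrightarrow> bij_betw (sh_a C) (hom C X Y) (hom C (sh_o C X) (sh_o C Y))"
  using shift_ok unfolding shift_ok_def by blast

lemma shift_in_obj: "X \<in> obj C \<Longrightarrow> sh_o C X \<in> obj C"
  using shift_ok bij_betw_apply unfolding shift_ok_def by metis

lemma shift_obj_surj: "Z \<in> obj C \<Longrightarrow> \<exists>W\<in>obj C. Z = sh_o C W"
  using shift_ok unfolding shift_ok_def bij_betw_def by blast

lemma shift_in_hom: "f \<in> hom C X Y \<Longrightarrow> sh_a C f \<in> hom C (sh_o C X) (sh_o C Y)"
  using shift_hom_bij hom_objs bij_betw_apply by metis

lemma shift_hom_surj:
  "X \<in> obj C \<Longrightarrow> Y \<in> obj C \<Longrightarrow> g \<in> hom C (sh_o C X) (sh_o C Y) \<Longrightarrow>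
   \<exists>f\<in>hom C X Y. g = sh_a C f"
  using shift_hom_bij[of X Y] unfolding bij_betw_def by blast

lemma shift_inj:
  "f \<in> hom C X Y \<Longrightarrow> g \<in> hom C X Y \<Longrightarrow> sh_a C f = sh_a C g \<Longrightarrow> f = g"
  using shift_hom_bij[of X Y] hom_objs unfolding bij_betw_def inj_on_def by blast

lemma shift_id: "X \<in> obj C \<Longrightarrow> sh_a C (idn C X) = idn C (sh_o C X)"
  using shift_ok unfolding shift_ok_def by blast

lemma shift_comp:
  "f \<in> hom C X Y \<Longrightarrow> g \<in> hom C Y Z \<Longrightarrow> sh_a C (cmp C g f) = cmp C (sh_a C g) (sh_a C f)"
  using shift_ok unfolding shift_ok_def by blast

lemma shift_add:
  "f \<in> hom C X Y \<Longrightarrow> g \<in> hom C X Y \<Longrightarrow> sh_a C (adr C f g) = adr C (sh_a C f) (sh_a C g)"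
  using shift_ok unfolding shift_ok_def by blast

lemma shift_zero:
  assumes X: "X \<in> obj C" and Y: "Y \<in> obj C"
  shows "sh_a C (zro C X Y) = zro C (sh_o C X) (sh_o C Y)"
proof -
  have z: "zro C X Y \<in> hom C X Y"
    using zero_in_hom X Y .
  have "adr C (sh_a C (zro C X Y)) (sh_a C (zro C X Y)) = sh_a C (zro C X Y)"
    using shift_add[OF z z] add_zero_left[OF z] by simp
  then show ?thesis
    using add_self_eq_zero shift_in_hom[OF z] by blast
qed

lemma shift_neg:
  assumes f: "f \<in> hom C X Y"
  shows "sh_a C (ngt C f) = ngt C (sh_a C f)"
proof -
  have "adr C (sh_a C f) (sh_a C (ngt C f)) = zro C (sh_o C X) (sh_o C Y)"
    using shift_add[OF f neg_in_hom[OF f]] add_neg[OF f] shift_zero hom_objs[OF f] by simp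
  then show ?thesis
    using neg_unique shift_in_hom f neg_in_hom by blast
qed

lemma dtri_is_tri: "(X,Y,Z,u,v,w) \<in> dtri C \<Longrightarrow> is_tri C X Y Z u v w"
  using is_triangulated unfolding is_triangulated_def by (elim conjE) blast

lemma dtri_in_hom:
  assumes "(X,Y,Z,u,v,w) \<in> dtri C"
  shows "X \<in> obj C" "Y \<in> obj C" "Z \<in> obj C"
    and "u \<in> hom C X Y" "v \<in> hom C Y Z" "w \<in> hom C Z (sh_o C X)"
  using dtri_is_tri[OF assms] unfolding is_tri_def by auto

lemma dtri_id_zero:
  assumes "X \<in> obj C" "zero_obj C Z"
  shows "(X, X, Z, idn C X, zro C X Z, zro C Z (sh_o C X)) \<in> dtri C"
proof -
  have "\<forall>X\<in>obj C. \<forall>Z. zero_obj C Z \<longrightarrow> (X, X, Z, idn C X, zro C X Z, zro C Z (sh_o C X)) \<in> dtri C"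
    using is_triangulated unfolding is_triangulated_def by (elim conjE)
  then show ?thesis
    using assms by blast
qed

lemma dtri_exists:
  assumes u: "u \<in> hom C X Y"
  shows "\<exists>Z v w. (X,Y,Z,u,v,w) \<in> dtri C"
proof -
  have "\<forall>X Y u. X \<in> obj C \<longrightarrow> Y \<in> obj C \<longrightarrow> u \<in> hom C X Y \<longrightarrow> (\<exists>Z v w. (X,Y,Z,u,v,w) \<in> dtri C)"
    using is_triangulated unfolding is_triangulated_def by (elim conjE)
  then show ?thesis
    using u hom_objs by blast
qed

lemma dtri_rotate_iff:
  assumes "is_tri C X Y Z u v w"
  shows "(X,Y,Z,u,v,w) \<in> dtri C \<longleftrightarrow> (Y, Z, sh_o C X, v, w, ngt C (sh_a C u)) \<in> dtri C"
proof -
  have "\<forall>X Y Z u v w. is_tri C X Y Z u v w \<longrightarrow>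
     ((X,Y,Z,u,v,w) \<in> dtri C \<longleftrightarrow> (Y, Z, sh_o C X, v, w, ngt C (sh_a C u)) \<in> dtri C)"
    using is_triangulated unfolding is_triangulated_def by (elim conjE)
  then show ?thesis
    using assms by blast
qed

lemma dtri_rotate:
  "(X,Y,Z,u,v,w) \<in> dtri C \<Longrightarrow> (Y, Z, sh_o C X, v, w, ngt C (sh_a C u)) \<in> dtri C"
  using dtri_rotate_iff dtri_is_tri by blast

lemma dtri_morph_exists:
  assumes "(X,Y,Z,u,v,w) \<in> dtri C" "(X',Y',Z',u',v',w') \<in> dtri C"
    and "a \<in> hom C X X'" "b \<in> hom C Y Y'" "cmp C u' a = cmp C b u"
  shows "\<exists>c. tri_morph C X Y Z u v w X' Y' Z' u' v' w' a b c"
proof -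
  have "\<forall>X Y Z u v w X' Y' Z' u' v' w' a b.
     (X,Y,Z,u,v,w) \<in> dtri C \<longrightarrow> (X',Y',Z',u',v',w') \<in> dtri C \<longrightarrow>
     a \<in> hom C X X' \<longrightarrow> b \<in> hom C Y Y' \<longrightarrow> cmp C u' a = cmp C b u \<longrightarrow>
     (\<exists>c. tri_morph C X Y Z u v w X' Y' Z' u' v' w' a b c)"
    using is_triangulated unfolding is_triangulated_def by (elim conjE)
  then show ?thesis
    using assms by blast
qed

lemma dtri_comp_zero:
  assumes d: "(X,Y,Z,u,v,w) \<in> dtri C"
  shows "cmp C v u = zro C X Z"
proof -
  obtain Z0 where Z0: "zero_obj C Z0"
    using exists_zero_obj by blast
  have X: "X \<in> obj C" and u: "u \<in> hom C X Y"
    using dtri_in_hom[OF d] by auto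
  obtain c where "tri_morph C X X Z0 (idn C X) (zro C X Z0) (zro C Z0 (sh_o C X))
      X Y Z u v w (idn C X) u c"
    using dtri_morph_exists[OF dtri_id_zero[OF X Z0] d id_in_hom[OF X] u] by blast
  then have "c \<in> hom C Z0 Z" and "cmp C v u = cmp C c (zro C X Z0)"
    unfolding tri_morph_def by auto
  then show ?thesis
    using comp_zero_right X by simp
qed

lemma dtri_unrotate:
  assumes d: "(X,Y,Z,u,v,w) \<in> dtri C"
  obtains W w' where "W \<in> obj C" "w' \<in> hom C W X" "Z = sh_o C W" "(W,X,Y,w',u,v) \<in> dtri C"
proof -
  note t = dtri_in_hom[OF d]
  obtain W where W: "W \<in> obj C" "Z = sh_o C W"
    using shift_obj_surj[OF t(3)] by blast
  obtain w1 where w1: "w1 \<in> hom C W X" "w = sh_a C w1"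
    using shift_hom_surj[OF W(1) t(1)] t(6) W(2) by blast
  have nw1: "ngt C w1 \<in> hom C W X"
    using neg_in_hom[OF w1(1)] .
  have "ngt C (sh_a C (ngt C w1)) = w"
    using shift_neg[OF w1(1)] neg_neg[OF shift_in_hom[OF w1(1)]] w1(2) by simp
  moreover have "is_tri C W X Y (ngt C w1) u v"
    unfolding is_tri_def using W t nw1 by auto
  ultimately have "(W,X,Y,ngt C w1,u,v) \<in> dtri C"
    using dtri_rotate_iff d W(2) by simp
  then show ?thesis
    using that W nw1 by blast
qed

lemma dtri_weak_cokernel:
  assumes d: "(X,Y,Z,u,v,w) \<in> dtri C"
    and t: "t \<in> hom C Y R" and tu: "cmp C t u = zro C X R"
  obtains c where "c \<in> hom C Z R" "t = cmp C c v"
proof -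
  note tri = dtri_in_hom[OF d]
  have R: "R \<in> obj C"
    using hom_objs[OF t] by blast
  obtain Z0 where Z0: "zero_obj C Z0"
    using exists_zero_obj by blast
  \<comment> \<open>map d into the backward rotation of the trivial triangle on R\<close>
  obtain W w' where W: "W \<in> obj C" "w' \<in> hom C W R" "(W,R,R,w',idn C R,zro C R Z0) \<in> dtri C"
    using dtri_unrotate[OF dtri_id_zero[OF R Z0]] by blast
  have "cmp C w' (zro C X W) = cmp C t u"
    using comp_zero_right[OF W(2) tri(1)] tu by simp
  then obtain c where "tri_morph C X Y Z u v w W R R w' (idn C R) (zro C R Z0) (zro C X W) t c"
    using dtri_morph_exists[OF d W(3) zero_in_hom[OF tri(1) W(1)] t] by blast
  then have "c \<in> hom C Z R" and "cmp C (idn C R) t = cmp C c v"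
    unfolding tri_morph_def by auto
  then show ?thesis
    using that comp_id_left[OF t] by simp
qed

lemma dtri_weak_kernel:
  assumes d: "(X,Y,Z,u,v,w) \<in> dtri C"
    and t: "t \<in> hom C R Y" and vt: "cmp C v t = zro C R Z"
  obtains a where "a \<in> hom C R X" "t = cmp C u a"
proof -
  note tri = dtri_in_hom[OF d]
  have R: "R \<in> obj C"
    using hom_objs[OF t] by blast
  obtain Z0 where Z0: "zero_obj C Z0"
    using exists_zero_obj by blast
  have z: "zro C Z0 Z \<in> hom C Z0 Z"
    using Z0 tri(3) zero_in_hom unfolding zero_obj_def by blast
  have "cmp C v t = cmp C (zro C Z0 Z) (zro C R Z0)"
    using vt comp_zero_right[OF z R] by simp
  \<comment> \<open>map the rotated trivial triangle on R into the rotation of d, then unshift\<close>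
  then obtain c where "tri_morph C R Z0 (sh_o C R) (zro C R Z0) (zro C Z0 (sh_o C R))
      (ngt C (sh_a C (idn C R))) Y Z (sh_o C X) v w (ngt C (sh_a C u)) t (zro C Z0 Z) c"
    using dtri_morph_exists[OF dtri_rotate[OF dtri_id_zero[OF R Z0]] dtri_rotate[OF d] t z]
    by blast
  then have c: "c \<in> hom C (sh_o C R) (sh_o C X)"
    and square: "cmp C (ngt C (sh_a C u)) c = cmp C (sh_a C t) (ngt C (sh_a C (idn C R)))"
    unfolding tri_morph_def by auto
  obtain a where a: "a \<in> hom C R X" "c = sh_a C a"
    using shift_hom_surj[OF R tri(1) c] by blast
  have ua: "cmp C u a \<in> hom C R Y"
    using comp_in_hom[OF a(1) tri(4)] .
  have "ngt C (sh_a C (cmp C u a)) = ngt C (sh_a C t)"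
    using square a(2) comp_neg_left[OF c shift_in_hom[OF tri(4)]] shift_comp[OF a(1) tri(4)]
      shift_id[OF R] comp_neg_right[OF id_in_hom[OF shift_in_obj[OF R]] shift_in_hom[OF t]]
      comp_id_right[OF shift_in_hom[OF t]]
    by simp
  then have "sh_a C (cmp C u a) = sh_a C t"
    using neg_neg shift_in_hom[OF ua] shift_in_hom[OF t] by metis
  then show ?thesis
    using that a(1) shift_inj[OF ua t] by simp
qed

lemma dtri_cone_of_id_zero_obj:
  assumes d: "(X,X,K,idn C X,p,q) \<in> dtri C"
  shows "zero_obj C K"
proof -
  note tri = dtri_in_hom[OF d]
  have p0: "p = zro C X K"
    using dtri_comp_zero[OF d] comp_id_right[OF tri(5)] by simp
  have d': "(X, K, sh_o C X, p, q, ngt C (sh_a C (idn C X))) \<in> dtri C"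
    using dtri_rotate[OF d] .
  \<comment> \<open>the second rotation of d begins with q followed by -1\<close>
  have "ngt C q = zro C K (sh_o C X)"
    using dtri_comp_zero[OF dtri_rotate[OF d']] shift_id[OF tri(1)]
      comp_neg_left[OF tri(6) id_in_hom[OF shift_in_obj[OF tri(1)]]] comp_id_left[OF tri(6)]
    by simp
  then have q0: "q = zro C K (sh_o C X)"
    using neg_eq_zeroD[OF tri(6)] by blast
  have "cmp C (idn C K) p = zro C X K"
    using p0 comp_id_left[OF tri(5)] by simp
  then obtain c where c: "c \<in> hom C (sh_o C X) K" "idn C K = cmp C c q"
    using dtri_weak_cokernel[OF d' id_in_hom[OF tri(3)]] by blast
  have "idn C K = zro C K K"
    using c q0 comp_zero_right tri(3) by simp
  then show ?thesis
    using zero_objI[OF tri(3)] by blast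
qed

end

locale triangle_functor = A: triangulated A + B: triangulated B
  for A :: "('o1,'m1) tricat" and B :: "('o2,'m2) tricat" +
  fixes Fo :: "'o1 \<Rightarrow> 'o2" and Fm :: "'m1 \<Rightarrow> 'm2" and xi :: "'o1 \<Rightarrow> 'm2"
  assumes is_triangle_functor: "is_triangle_functor A B Fo Fm xi"
begin

lemma map_in_obj: "X \<in> obj A \<Longrightarrow> Fo X \<in> obj B"
  using is_triangle_functor unfolding is_triangle_functor_def by (elim conjE) blast

lemma map_in_hom: "f \<in> hom A X Y \<Longrightarrow> Fm f \<in> hom B (Fo X) (Fo Y)"
  using is_triangle_functor unfolding is_triangle_functor_def by (elim conjE) blast

lemma map_comp: "f \<in> hom A X Y \<Longrightarrow> g \<in> hom A Y Z \<Longrightarrow> Fm (cmp A g f) = cmp B (Fm g) (Fm f)"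
  using is_triangle_functor unfolding is_triangle_functor_def by blast

lemma map_dtri:
  "(X,Y,Z,u,v,w) \<in> dtri A \<Longrightarrow> (Fo X, Fo Y, Fo Z, Fm u, Fm v, cmp B (xi X) (Fm w)) \<in> dtri B"
  using is_triangle_functor unfolding is_triangle_functor_def by blast

lemma killed_morphism_annihilated_by_lift_of_id:
  assumes full: "is_full A B Fo Fm"
    and f: "f \<in> hom A X Y" and Ff: "Fm f = zro B (Fo X) (Fo Y)"
  obtains e where "e \<in> hom A X X" "Fm e = idn B (Fo X)" "cmp A f e = zro A X Y"
proof -
  obtain Z g h where "(X,Y,Z,f,g,h) \<in> dtri A"
    using A.dtri_exists[OF f] by blast
  then obtain W w where W: "W \<in> obj A" and w: "w \<in> hom A W X" and d: "(W,X,Y,w,f,g) \<in> dtri A"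
    by (rule A.dtri_unrotate)
  have X: "X \<in> obj A" and Y: "Y \<in> obj A"
    using A.hom_objs[OF f] by auto
  have "cmp B (Fm f) (idn B (Fo X)) = zro B (Fo X) (Fo Y)"
    using B.comp_id_right[OF map_in_hom[OF f]] Ff by simp
  then obtain a where a: "a \<in> hom B (Fo X) (Fo W)" "idn B (Fo X) = cmp B (Fm w) a"
    using B.dtri_weak_kernel[OF map_dtri[OF d] B.id_in_hom[OF map_in_obj[OF X]]] by blast
  obtain s where s: "s \<in> hom A X W" "Fm s = a"
    using full X W a(1) unfolding is_full_def by blast
  have "Fm (cmp A w s) = idn B (Fo X)"
    using map_comp[OF s(1) w] s(2) a(2) by simp
  moreover have "cmp A f (cmp A w s) = zro A X Y"
    using A.comp_assoc[OF s(1) w f] A.dtri_comp_zero[OF d] A.comp_zero_left[OF s(1) Y] by simp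
  ultimately show ?thesis
    using that A.comp_in_hom[OF s(1) w] by blast
qed

lemma factors_through_cone_of_lift_of_id:
  assumes e: "e \<in> hom A X X" and Fe: "Fm e = idn B (Fo X)"
    and f: "f \<in> hom A X Y" and fe: "cmp A f e = zro A X Y"
  shows "\<exists>K a b. K \<in> obj A \<and> zero_obj B (Fo K) \<and> a \<in> hom A X K \<and> b \<in> hom A K Y \<and>
    f = cmp A b a"
proof -
  obtain K p q where d: "(X,X,K,e,p,q) \<in> dtri A"
    using A.dtri_exists[OF e] by blast
  have "zero_obj B (Fo K)"
    using B.dtri_cone_of_id_zero_obj map_dtri[OF d] Fe by simp
  moreover obtain b where "b \<in> hom A K Y" "f = cmp A b p"
    using A.dtri_weak_cokernel[OF d f fe] by blast
  ultimately show ?thesis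
    using A.dtri_in_hom[OF d] by blast
qed

end

theorem mainTheorem9:
  fixes A :: "('o1,'m1) tricat" and B :: "('o2,'m2) tricat"
    and Fo :: "'o1 \<Rightarrow> 'o2" and Fm :: "'m1 \<Rightarrow> 'm2" and xi :: "'o1 \<Rightarrow> 'm2"
  assumes "is_triangulated A" and "is_triangulated B"
    and "is_triangle_functor A B Fo Fm xi"
    and "is_full A B Fo Fm"
  shows "is_objective A B Fo Fm"
proof -
  interpret triangle_functor A B Fo Fm xi
    using assms(1-3) by (simp add: triangle_functor_def triangulated_def triangle_functor_axioms_def)
  show ?thesis
    unfolding is_objective_def
  proof (intro allI impI)
    fix X Y f
    assume f: "f \<in> hom A X Y" and Ff: "Fm f = zro B (Fo X) (Fo Y)"
    obtain e where "e \<in> hom A X X" "Fm e = idn B (Fo X)" "cmp A f e = zro A X Y"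
      using killed_morphism_annihilated_by_lift_of_id[OF assms(4) f Ff] .
    then show "\<exists>K a b. K \<in> obj A \<and> zero_obj B (Fo K) \<and> a \<in> hom A X K \<and> b \<in> hom A K Y \<and>
        f = cmp A b a"
      using factors_through_cone_of_lift_of_id f by blast
  qed
qed

end
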